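(* Let $\mathfrak A$ be the real algebra of generalized transformations equipped with the involution $\mathcal A\mapsto\mathcal A'$ (a generalized adjoint), and let $\varphi=\Phi|_1$ be the local state of a symmetric faithful state $\Phi$ which is also preparationally faithful. Define $\langle\mathcal A|\mathcal B\rangle_\varphi=\varphi(\mathcal A'\circ\mathcal B)$, $\|\mathcal A\|_\varphi=\sqrt{\langle\mathcal A|\mathcal A\rangle_\varphi}$, and the left ideal $\mathfrak I=\{\mathcal X\in\mathfrak A:\varphi(\mathcal X'\circ\mathcal X)=0\}$. Let $\mathcal A,\mathcal B\in\mathfrak A$ be bounded, i.e. $\|\mathcal A\|,\|\mathcal A'\|,\|\mathcal B\|,\|\mathcal B'\|<\infty$ where $\|\mathcal C\|=\sup_{\omega\in\mathfrak S}|\omega(\mathcal C)|$. Then $\mathcal A-\mathcal B\in\mathfrak I$ (i.e. $\mathcal A$ and $\mathcal B$ lie in the same class of $\mathfrak A/\mathfrak I$) if and only if $\mathcal A$ and $\mathcal B$ are informationally equivalent, i.e. $\omega(\mathcal A)=\omega(\mathcal B)$ for all $\omega\in\mathfrak S$.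
   Context: States $\omega\in\mathfrak S$ extend linearly to $\mathfrak A$. A generalized adjoint on $\mathfrak A$ satisfies $(\mathcal A+\mathcal B)'=\mathcal A'+\mathcal B'$, $(\mathcal A')'=\mathcal A$, $(\mathcal A\circ\mathcal B)'=\mathcal B'\circ\mathcal A'$, and $\mathcal A'\circ\mathcal A=0\Rightarrow\mathcal A=0$. $\varphi$ is a state and a real positive form: $\varphi(\mathcal A')=\varphi(\mathcal A)$ and $\varphi(\mathcal A'\circ\mathcal A)\ge0$ for all $\mathcal A\in\mathfrak A$; moreover $\|\mathcal C\circ\mathcal D\|\le\|\mathcal C\|\|\mathcal D\|$. Preparational faithfulness is used in the form: for every $\omega\in\mathfrak S$ there is a transformation $\mathcal T_\omega$ with $\varphi(\mathcal T_\omega)\ne0$ such that $\omega(\mathcal A)=\varphi(\mathcal A\circ\mathcal T_\omega')/\varphi(\mathcal T_\omega)=\langle\mathcal A'|\tilde{\mathcal T}_\omega\rangle_\varphi$ for all $\mathcal A$, where $\tilde{\mathcal T}_\omega=\mathcal T_\omega'/\varphi(\mathcal T_\omega)$. *)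

theory Defs
  imports "HOL-Analysis.Analysis"
begin

text \<open>Abstract setting: the real algebra of generalized transformations is modelled
  by a type of class real_algebra; composition is the ring multiplication (*).
  States are real-valued functions on the algebra (their linear extensions).\<close>

definition gen_adjoint :: "('a::real_algebra \<Rightarrow> 'a) \<Rightarrow> bool" where
  "gen_adjoint adj \<longleftrightarrow>
     (\<forall>A B. adj (A + B) = adj A + adj B) \<and>
     (\<forall>A. adj (adj A) = A) \<and>
     (\<forall>A B. adj (A * B) = adj B * adj A) \<and>
     (\<forall>A. adj A * A = 0 \<longrightarrow> A = 0)"

definition st_norm :: "('a \<Rightarrow> real) set \<Rightarrow> 'a \<Rightarrow> ereal" where
  "st_norm S C = (SUP \<omega>\<in>S. ereal \<bar>\<omega> C\<bar>)"

definition inner_phi :: "('a::real_algebra \<Rightarrow> real) \<Rightarrow> ('a \<Rightarrow> 'a) \<Rightarrow> 'a \<Rightarrow> 'a \<Rightarrow> real" where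
  "inner_phi \<phi> adj A B = \<phi> (adj A * B)"

definition norm_phi :: "('a::real_algebra \<Rightarrow> real) \<Rightarrow> ('a \<Rightarrow> 'a) \<Rightarrow> 'a \<Rightarrow> real" where
  "norm_phi \<phi> adj A = sqrt (inner_phi \<phi> adj A A)"

definition ideal_I :: "('a::real_algebra \<Rightarrow> real) \<Rightarrow> ('a \<Rightarrow> 'a) \<Rightarrow> 'a set" where
  "ideal_I \<phi> adj = {X. \<phi> (adj X * X) = 0}"

end

theory Submission
  imports Defs
begin

text \<open>The form \<open>\<langle>X|V\<rangle> = \<phi>(X' V)\<close> is symmetric and positive semidefinite, so every
  \<open>X \<in> \<I>\<close> is orthogonal to everything. As every state has the form \<open>\<omega>(Y) = \<phi>(Y T)/c\<close>
  (preparational faithfulness), all states then vanish on \<open>X'\<close>; submultiplicativity of the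
  operational norm gives \<open>\<phi>(X X') = 0\<close>, i.e. \<open>X' \<in> \<I>\<close>, and the same argument applied to \<open>X'\<close>
  shows that all states vanish on \<open>X\<close>. Conversely, if all states vanish on \<open>X\<close>, then
  \<open>\<parallel>X' X\<parallel> \<le> \<parallel>X'\<parallel> \<parallel>X\<parallel> = 0\<close>, so \<open>\<phi>(X' X) = 0\<close>.\<close>

lemma
  assumes "gen_adjoint adj"
  shows gen_adjoint_additive: "Modules.additive adj"
    and gen_adjoint_involutive: "adj (adj A) = A"
    and gen_adjoint_mult: "adj (A * B) = adj B * adj A"
  using assms unfolding gen_adjoint_def Modules.additive_def by blast+

text \<open>The axioms make \<open>adj\<close> only additive, not \<open>\<real>\<close>-linear, so only natural multiples commute
  with it; hence the positivity argument below uses an Archimedean bound instead of a discriminant.\<close>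
lemma gen_adjoint_scaleR_of_nat:
  assumes "gen_adjoint adj"
  shows "adj (real n *\<^sub>R A) = real n *\<^sub>R adj A"
proof -
  interpret Modules.additive adj by (rule gen_adjoint_additive [OF assms])
  show ?thesis using sum [of "\<lambda>_. A" "{..<n}"] by (simp add: sum_constant_scaleR)
qed

lemma bounded_nat_multiples_imp_zero:
  fixes b c :: real
  assumes "\<And>n::nat. real n * \<bar>b\<bar> \<le> c"
  shows "b = 0"
proof (rule ccontr)
  assume "b \<noteq> 0"
  obtain n :: nat where "c / \<bar>b\<bar> < real n" using reals_Archimedean2 by blast
  with \<open>b \<noteq> 0\<close> have "c < real n * \<bar>b\<bar>" by (simp add: field_simps)
  with assms [of n] show False by simp
qed

locale real_positive_form =
  fixes adj :: "'a::real_algebra \<Rightarrow> 'a" and \<phi> :: "'a \<Rightarrow> real"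
  assumes adjoint: "gen_adjoint adj"
    and linear: "linear \<phi>"
    and real: "\<And>X. \<phi> (adj X) = \<phi> X"
    and positive: "\<And>X. 0 \<le> \<phi> (adj X * X)"
begin

lemma inner_phi_commute: "inner_phi \<phi> adj V X = inner_phi \<phi> adj X V"
  using real [of "adj X * V"]
  by (simp add: inner_phi_def gen_adjoint_mult [OF adjoint] gen_adjoint_involutive [OF adjoint])

lemma inner_phi_add_self:
  "inner_phi \<phi> adj (Y + V) (Y + V) =
     inner_phi \<phi> adj Y Y + 2 * inner_phi \<phi> adj Y V + inner_phi \<phi> adj V V"
proof -
  have "adj (Y + V) * (Y + V) = adj Y * Y + adj Y * V + adj V * Y + adj V * V"
    using Modules.additive.add [OF gen_adjoint_additive [OF adjoint]] by (simp add: algebra_simps)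
  then show ?thesis
    using inner_phi_commute [of V Y] by (simp add: inner_phi_def linear_add [OF linear])
qed

lemma ideal_I_orthogonal:
  assumes "X \<in> ideal_I \<phi> adj"
  shows "inner_phi \<phi> adj X V = 0"
proof -
  let ?b = "inner_phi \<phi> adj X V" and ?c = "inner_phi \<phi> adj V V"
  have "real n * \<bar>2 * ?b\<bar> \<le> ?c" for n :: nat
  proof -
    let ?Y = "real n *\<^sub>R X"
    have adj_minus: "adj (- V) = - adj V"
      by (rule Modules.additive.minus [OF gen_adjoint_additive [OF adjoint]])
    have "inner_phi \<phi> adj ?Y ?Y = 0"
      using assms by (simp add: ideal_I_def inner_phi_def gen_adjoint_scaleR_of_nat [OF adjoint]
          linear_scale [OF linear])
    moreover have "inner_phi \<phi> adj ?Y V = real n * ?b"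
      by (simp add: inner_phi_def gen_adjoint_scaleR_of_nat [OF adjoint] linear_scale [OF linear])
    moreover have "inner_phi \<phi> adj ?Y (- V) = - real n * ?b"
      by (simp add: inner_phi_def gen_adjoint_scaleR_of_nat [OF adjoint] linear_scale [OF linear]
          linear_neg [OF linear])
    moreover have "inner_phi \<phi> adj (- V) (- V) = ?c"
      by (simp add: inner_phi_def adj_minus)
    ultimately have "inner_phi \<phi> adj (?Y + V) (?Y + V) = 2 * real n * ?b + ?c"
      and "inner_phi \<phi> adj (?Y + - V) (?Y + - V) = ?c - 2 * real n * ?b"
      using inner_phi_add_self [of ?Y V] inner_phi_add_self [of ?Y "- V"] by simp_all
    moreover have "0 \<le> inner_phi \<phi> adj (?Y + V) (?Y + V)"
      and "0 \<le> inner_phi \<phi> adj (?Y + - V) (?Y + - V)"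
      using positive unfolding inner_phi_def by blast+
    ultimately show ?thesis by (auto simp: abs_if)
  qed
  then show ?thesis using bounded_nat_multiples_imp_zero [of "2 * ?b" ?c] by simp
qed

end

lemma st_norm_eq_0_iff:
  assumes "S \<noteq> {}"
  shows "st_norm S C = 0 \<longleftrightarrow> (\<forall>\<omega>\<in>S. \<omega> C = 0)"
proof
  assume "st_norm S C = 0"
  then have "ereal \<bar>\<omega> C\<bar> \<le> 0" if "\<omega> \<in> S" for \<omega>
    using SUP_upper [OF that, of "\<lambda>\<omega>. ereal \<bar>\<omega> C\<bar>"] by (simp add: st_norm_def)
  then show "\<forall>\<omega>\<in>S. \<omega> C = 0" by simp
next
  assume "\<forall>\<omega>\<in>S. \<omega> C = 0"
  then have "(\<lambda>\<omega>. ereal \<bar>\<omega> C\<bar>) ` S = {0}" using assms by auto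
  then show "st_norm S C = 0" by (simp add: st_norm_def)
qed

text \<open>Since \<open>\<infinity> * 0 = 0\<close> in \<open>ereal\<close>, no boundedness of \<open>C\<close> is needed.\<close>
lemma states_vanish_mult_left:
  assumes "S \<noteq> {}"
    and submult: "\<forall>C D. st_norm S (C * D) \<le> st_norm S C * st_norm S D"
    and "\<forall>\<omega>\<in>S. \<omega> Y = 0"
  shows "\<forall>\<omega>\<in>S. \<omega> (C * Y) = 0"
proof -
  have "st_norm S Y = 0" using st_norm_eq_0_iff [OF assms(1)] assms(3) by blast
  then have "st_norm S (C * Y) \<le> 0" using submult [rule_format, of C Y] by simp
  moreover have "0 \<le> st_norm S (C * Y)"
    using assms(1) by (auto simp: st_norm_def intro: SUP_upper2)
  ultimately show ?thesis using st_norm_eq_0_iff [OF assms(1)] by simp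
qed

lemma ideal_I_iff_states_vanish:
  assumes "real_positive_form adj \<phi>"
    and phi_state: "\<phi> \<in> S"
    and submult: "\<forall>C D. st_norm S (C * D) \<le> st_norm S C * st_norm S D"
    and faithful: "\<forall>\<omega>\<in>S. \<exists>T c. \<forall>Y. \<omega> Y = \<phi> (Y * T) / c"
  shows "X \<in> ideal_I \<phi> adj \<longleftrightarrow> (\<forall>\<omega>\<in>S. \<omega> X = 0)"
proof -
  interpret real_positive_form adj \<phi> by (rule assms(1))
  have right_annihilated: "\<forall>\<omega>\<in>S. \<omega> Y = 0" if "\<And>V. \<phi> (Y * V) = 0" for Y
  proof
    fix \<omega> assume "\<omega> \<in> S"
    then obtain T c where "\<And>Z. \<omega> Z = \<phi> (Z * T) / c" using faithful by blast
    then show "\<omega> Y = 0" using that by simp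
  qed
  have left_ideal: "\<phi> (C * Y) = 0" if "\<forall>\<omega>\<in>S. \<omega> Y = 0" for C Y
    using states_vanish_mult_left [OF _ submult that] phi_state by blast
  have orthogonal: "\<phi> (adj Y * V) = 0" if "Y \<in> ideal_I \<phi> adj" for Y V
    using ideal_I_orthogonal [OF that] by (simp add: inner_phi_def)
  show ?thesis
  proof
    assume "X \<in> ideal_I \<phi> adj"
    then have "\<forall>\<omega>\<in>S. \<omega> (adj X) = 0"
      using right_annihilated orthogonal by blast
    then have "adj X \<in> ideal_I \<phi> adj"
      using left_ideal [of "adj X" X] by (simp add: ideal_I_def gen_adjoint_involutive [OF adjoint])
    then show "\<forall>\<omega>\<in>S. \<omega> X = 0"
      using right_annihilated orthogonal [of "adj X"] by (simp add: gen_adjoint_involutive [OF adjoint])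
  next
    assume "\<forall>\<omega>\<in>S. \<omega> X = 0"
    then show "X \<in> ideal_I \<phi> adj" using left_ideal by (simp add: ideal_I_def)
  qed
qed

theorem mainTheorem9:
  fixes S :: "('a::real_algebra \<Rightarrow> real) set"
    and adj :: "'a \<Rightarrow> 'a"
    and \<phi> :: "'a \<Rightarrow> real"
    and A B :: 'a
  assumes adjoint: "gen_adjoint adj"
    and states_linear: "\<forall>\<omega>\<in>S. linear \<omega>"
    and phi_state: "\<phi> \<in> S"
    and phi_real: "\<forall>X. \<phi> (adj X) = \<phi> X"
    and phi_pos: "\<forall>X. \<phi> (adj X * X) \<ge> 0"
    and submult: "\<forall>C D. st_norm S (C * D) \<le> st_norm S C * st_norm S D"
    and prep_faithful: "\<forall>\<omega>\<in>S. \<exists>T. \<phi> T \<noteq> 0 \<and>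
           (\<forall>X. \<omega> X = \<phi> (X * adj T) / \<phi> T \<and>
                \<omega> X = inner_phi \<phi> adj (adj X) (scaleR (1 / \<phi> T) (adj T)))"
    and bdA: "st_norm S A < \<infinity>" "st_norm S (adj A) < \<infinity>"
    and bdB: "st_norm S B < \<infinity>" "st_norm S (adj B) < \<infinity>"
  shows "A - B \<in> ideal_I \<phi> adj \<longleftrightarrow> (\<forall>\<omega>\<in>S. \<omega> A = \<omega> B)"
proof -
  have "real_positive_form adj \<phi>"
    using adjoint states_linear phi_state phi_real phi_pos by (simp add: real_positive_form_def)
  moreover have "\<forall>\<omega>\<in>S. \<exists>T c. \<forall>Y. \<omega> Y = \<phi> (Y * T) / c"
    using prep_faithful by fast
  ultimately have "A - B \<in> ideal_I \<phi> adj \<longleftrightarrow> (\<forall>\<omega>\<in>S. \<omega> (A - B) = 0)"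
    using ideal_I_iff_states_vanish phi_state submult by blast
  also have "\<dots> \<longleftrightarrow> (\<forall>\<omega>\<in>S. \<omega> A = \<omega> B)"
    using states_linear by (simp add: linear_diff)
  finally show ?thesis .
qed

end
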